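(* Let $a<b$, $n\ge1$, and let $I_n: a=x_0<x_1<\cdots<x_n=b$ be the uniform partition with $x_{i+1}-x_i=h=\frac{b-a}{n}$ for $i=0,\dots,n-1$. Let $f:[a,b]\rightarrow\mathbb{R}$ be a twice continuously differentiable mapping in $(a,b)$ with $f''\in L^2[a,b]$. Define \[ S(f,I_n)=\frac{h}{2}\sum_{i=0}^{n-1}\left[f\left(\frac{3x_i+x_{i+1}}{4}\right)+f\left(\frac{x_i+3x_{i+1}}{4}\right)\right] \] and $R(f,I_n)=\int_a^b f(x)\,dx-S(f,I_n)$. Then \[ |R(f,I_n)|\leq \frac{(b-a)^{5/2}}{4\sqrt{3}\pi n^2}\|f''\|_2. \]
   Context: $\|g\|_2=\left(\int_a^b g(t)^2\,dt\right)^{1/2}$. *)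

theory Defs
  imports "HOL-Analysis.Analysis"
begin

definition unif_node :: "real \<Rightarrow> real \<Rightarrow> nat \<Rightarrow> nat \<Rightarrow> real" where
  "unif_node a b n i = a + real i * ((b - a) / real n)"

definition quad_S :: "(real \<Rightarrow> real) \<Rightarrow> real \<Rightarrow> real \<Rightarrow> nat \<Rightarrow> real" where
  "quad_S f a b n =
     ((b - a) / real n) / 2 *
     (\<Sum>i<n. f ((3 * unif_node a b n i + unif_node a b n (Suc i)) / 4)
            + f ((unif_node a b n i + 3 * unif_node a b n (Suc i)) / 4))"

definition L2norm :: "(real \<Rightarrow> real) \<Rightarrow> real \<Rightarrow> real \<Rightarrow> real" where
  "L2norm g a b = sqrt (integral {a..b} (\<lambda>t. (g t)\<^sup>2))"

end

theory Submission
  imports Defs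
begin

text \<open>Split each cell [x_i, x_{i+1}] into four quarters.  Two integrations by parts on each quarter
express the error as a sum of integrals of f'' against the Peano kernel (t - c)^2/2, c being the end
of the quarter that is a node or a midpoint; the boundary terms add up to exactly minus the quadrature
sum.  Cauchy--Schwarz on each quarter and then over the 4n quarters bounds the error by
(b - a)^(5/2) / (32 n^2) times the L^2 norm of f'', and 32 > 4 sqrt 3 pi.  The integrations by parts
reach the endpoints because square integrability of f'' makes f' Hoelder continuous of order 1/2,
so that f and f' extend continuously to [a, b].\<close>

lemma Cauchy_Schwarz_integral:
  fixes u v :: "real \<Rightarrow> real"
  assumes u2: "(\<lambda>t. (u t)\<^sup>2) integrable_on S" and v2: "(\<lambda>t. (v t)\<^sup>2) integrable_on S"
    and uv: "(\<lambda>t. u t * v t) integrable_on S"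
  shows "(integral S (\<lambda>t. u t * v t))\<^sup>2 \<le> integral S (\<lambda>t. (u t)\<^sup>2) * integral S (\<lambda>t. (v t)\<^sup>2)"
proof -
  define A where "A = integral S (\<lambda>t. (u t)\<^sup>2)"
  define B where "B = integral S (\<lambda>t. (v t)\<^sup>2)"
  define C where "C = integral S (\<lambda>t. u t * v t)"
  have quadratic_nonneg: "0 \<le> A - 2 * l * C + l\<^sup>2 * B" for l
  proof -
    have "((\<lambda>t. (u t - l * v t)\<^sup>2) has_integral A - 2 * l * C + l\<^sup>2 * B) S"
    proof -
      have "((\<lambda>t. (u t)\<^sup>2 - 2 * l * (u t * v t) + l\<^sup>2 * (v t)\<^sup>2) has_integral A - 2 * l * C + l\<^sup>2 * B) S"
        unfolding A_def B_def C_def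
        by (intro has_integral_add has_integral_diff has_integral_mult_right integrable_integral u2 v2 uv)
      then show ?thesis by (simp add: power2_eq_square algebra_simps)
    qed
    then show ?thesis by (rule has_integral_nonneg) simp
  qed
  have "0 \<le> B" unfolding B_def by (rule integral_nonneg[OF v2]) simp
  show ?thesis
  proof (cases "B = 0")
    case True
    then have "C = 0"
      using quadratic_nonneg[of "(A + 1) / (2 * C)"] by (cases "C = 0") (auto simp: field_simps)
    then show ?thesis using True by (simp add: A_def B_def C_def[symmetric])
  next
    case False
    with \<open>0 \<le> B\<close> have "B > 0" by simp
    with quadratic_nonneg[of "C / B"] have "C\<^sup>2 \<le> A * B"
      by (simp add: field_simps power2_eq_square)
    then show ?thesis by (simp add: A_def B_def C_def)
  qed
qed

lemma abs_diff_le_sqrt_integral_deriv_sq: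
  fixes \<phi> \<phi>' :: "real \<Rightarrow> real"
  assumes "s \<le> t" and "continuous_on {s..t} \<phi>"
    and "\<And>x. x \<in> {s<..<t} \<Longrightarrow> (\<phi> has_real_derivative \<phi>' x) (at x)"
    and "(\<lambda>x. (\<phi>' x)\<^sup>2) integrable_on {s..t}"
  shows "\<bar>\<phi> t - \<phi> s\<bar> \<le> sqrt ((t - s) * integral {s..t} (\<lambda>x. (\<phi>' x)\<^sup>2))"
proof -
  have ftc: "(\<phi>' has_integral (\<phi> t - \<phi> s)) {s..t}"
    using assms(1-3)
    by (intro fundamental_theorem_of_calculus_interior) (auto simp: has_real_derivative_iff_has_vector_derivative[symmetric])
  have "(integral {s..t} (\<lambda>x. 1 * \<phi>' x))\<^sup>2 \<le> integral {s..t} (\<lambda>x. 1\<^sup>2) * integral {s..t} (\<lambda>x. (\<phi>' x)\<^sup>2)"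
    using ftc assms(4) by (intro Cauchy_Schwarz_integral) auto
  then have "(\<phi> t - \<phi> s)\<^sup>2 \<le> (t - s) * integral {s..t} (\<lambda>x. (\<phi>' x)\<^sup>2)"
    using ftc \<open>s \<le> t\<close> by (simp add: integral_unique)
  then show ?thesis by (simp add: real_le_rsqrt)
qed

lemma uniformly_continuous_on_sqrt_modulus:
  assumes "0 \<le> C" and "\<And>s t. s \<in> S \<Longrightarrow> t \<in> S \<Longrightarrow> dist (\<phi> s) (\<phi> t) \<le> sqrt (C * dist s t)"
  shows "uniformly_continuous_on S (\<phi> :: 'a::metric_space \<Rightarrow> 'b::metric_space)"
  unfolding uniformly_continuous_on_def
proof (intro allI impI)
  fix e :: real assume "e > 0"
  show "\<exists>d>0. \<forall>x\<in>S. \<forall>x'\<in>S. dist x' x < d \<longrightarrow> dist (\<phi> x') (\<phi> x) < e"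
  proof (intro exI[of _ "e\<^sup>2 / (C + 1)"] conjI ballI impI)
    show "e\<^sup>2 / (C + 1) > 0" using \<open>e > 0\<close> \<open>0 \<le> C\<close> by simp
    fix x x' assume "x \<in> S" "x' \<in> S" and close: "dist x' x < e\<^sup>2 / (C + 1)"
    have "C * dist x' x \<le> C * (e\<^sup>2 / (C + 1))"
      using close \<open>0 \<le> C\<close> by (intro mult_left_mono) auto
    also have "\<dots> < e\<^sup>2"
      using \<open>e > 0\<close> \<open>0 \<le> C\<close> by (simp add: field_simps)
    finally have "sqrt (C * dist x' x) < e"
      using \<open>e > 0\<close> by (metis abs_of_pos real_sqrt_abs real_sqrt_less_mono)
    then show "dist (\<phi> x') (\<phi> x) < e"
      using assms(2)[OF \<open>x' \<in> S\<close> \<open>x \<in> S\<close>] by linarith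
  qed
qed

lemma uniformly_continuous_on_if_L2_deriv:
  fixes \<phi> \<phi>' :: "real \<Rightarrow> real"
  assumes d\<phi>: "\<And>x. x \<in> {a<..<b} \<Longrightarrow> (\<phi> has_real_derivative \<phi>' x) (at x)"
    and sq: "(\<lambda>t. (\<phi>' t)\<^sup>2) integrable_on {a..b}"
  shows "uniformly_continuous_on {a<..<b} \<phi>"
proof -
  define I where "I = integral {a..b} (\<lambda>t. (\<phi>' t)\<^sup>2)"
  have "0 \<le> I" unfolding I_def by (rule integral_nonneg[OF sq]) simp
  have increment: "\<bar>\<phi> t - \<phi> s\<bar> \<le> sqrt ((t - s) * I)" if "s \<in> {a<..<b}" "t \<in> {a<..<b}" "s \<le> t" for s t
  proof -
    have "{s..t} \<subseteq> {a<..<b}" using that by auto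
    then have "continuous_on {s..t} \<phi>"
      using d\<phi> by (meson DERIV_isCont continuous_at_imp_continuous_on subsetD)
    moreover have sq_st: "(\<lambda>x. (\<phi>' x)\<^sup>2) integrable_on {s..t}"
      using sq by (rule integrable_subinterval_real) (use that in auto)
    ultimately have "\<bar>\<phi> t - \<phi> s\<bar> \<le> sqrt ((t - s) * integral {s..t} (\<lambda>x. (\<phi>' x)\<^sup>2))"
      using that d\<phi> by (intro abs_diff_le_sqrt_integral_deriv_sq) auto
    also have "\<dots> \<le> sqrt ((t - s) * I)"
      unfolding I_def using that sq sq_st
      by (intro real_sqrt_le_mono mult_left_mono integral_subset_le) auto
    finally show ?thesis .
  qed
  show ?thesis
  proof (rule uniformly_continuous_on_sqrt_modulus[OF \<open>0 \<le> I\<close>])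
    fix s t assume "s \<in> {a<..<b}" "t \<in> {a<..<b}"
    then show "dist (\<phi> s) (\<phi> t) \<le> sqrt (I * dist s t)"
      using increment[of s t] increment[of t s]
      by (cases "s \<le> t") (auto simp: dist_real_def abs_minus_commute mult.commute)
  qed
qed

lemma continuous_extension_of_L2_second_derivative:
  fixes f f' f'' :: "real \<Rightarrow> real"
  assumes "a < b"
    and df: "\<And>x. x \<in> {a<..<b} \<Longrightarrow> (f has_real_derivative f' x) (at x)"
    and df': "\<And>x. x \<in> {a<..<b} \<Longrightarrow> (f' has_real_derivative f'' x) (at x)"
    and sq: "(\<lambda>t. (f'' t)\<^sup>2) integrable_on {a..b}"
  obtains g G where "continuous_on {a..b} g" "continuous_on {a..b} G"
    "\<And>x. x \<in> {a<..<b} \<Longrightarrow> g x = f x"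
    "\<And>x. x \<in> {a<..<b} \<Longrightarrow> (g has_real_derivative G x) (at x)"
    "\<And>x. x \<in> {a<..<b} \<Longrightarrow> (G has_real_derivative f'' x) (at x)"
proof -
  have "uniformly_continuous_on {a<..<b} f'"
    by (rule uniformly_continuous_on_if_L2_deriv[OF df' sq])
  then obtain G where ucG: "uniformly_continuous_on {a..b} G" and GE: "\<And>x. x \<in> {a<..<b} \<Longrightarrow> f' x = G x"
    using uniformly_continuous_on_extension_on_closure \<open>a < b\<close> by (metis closure_greaterThanLessThan)
  have cG: "continuous_on {a..b} G" using ucG by (rule uniformly_continuous_imp_continuous)
  then obtain B where B: "\<And>x. x \<in> {a..b} \<Longrightarrow> norm (G x) \<le> B"
    by (metis compact_Icc compact_continuous_image compact_imp_bounded bounded_iff imageI)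
  have "B-lipschitz_on {a<..<b} f"
  proof (rule lipschitz_onI)
    show "dist (f x) (f y) \<le> B * dist x y" if "x \<in> {a<..<b}" "y \<in> {a<..<b}" for x y
      unfolding dist_norm
      by (rule field_differentiable_bound[OF convex_real_interval(8) _ _ that])
        (use df GE B in \<open>auto intro: has_field_derivative_at_within\<close>)
    show "0 \<le> B" using B[of a] \<open>a < b\<close> by simp
  qed
  then obtain g where "B-lipschitz_on {a..b} g" and gE: "\<forall>x\<in>{a<..<b}. g x = f x"
    using lipschitz_extend_closure \<open>a < b\<close> by (metis closure_greaterThanLessThan)
  show ?thesis
  proof
    show "continuous_on {a..b} g" by (rule lipschitz_on_continuous_on) fact
    show "continuous_on {a..b} G" by fact
    show "g x = f x" if "x \<in> {a<..<b}" for x using gE that by blast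
    show "(g has_real_derivative G x) (at x)" if "x \<in> {a<..<b}" for x
      using has_field_derivative_transform_within_open[OF df[OF that] open_greaterThanLessThan that] gE GE[OF that]
      by auto
    show "(G has_real_derivative f'' x) (at x)" if "x \<in> {a<..<b}" for x
      using has_field_derivative_transform_within_open[OF df'[OF that] open_greaterThanLessThan that] GE
      by auto
  qed
qed

text \<open>Boundary terms of integrating (t - c)^2/2 * g''(t) by parts twice over [lo, hi], where G = g'.\<close>
definition kernel_boundary_term ::
    "(real \<Rightarrow> real) \<Rightarrow> (real \<Rightarrow> real) \<Rightarrow> real \<Rightarrow> real \<Rightarrow> real \<Rightarrow> real" where
  "kernel_boundary_term g G c lo hi =
     ((hi - c)\<^sup>2 / 2 * G hi - (hi - c) * g hi) - ((lo - c)\<^sup>2 / 2 * G lo - (lo - c) * g lo)"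

lemma has_integral_quadratic_kernel_by_parts:
  fixes g G g'' :: "real \<Rightarrow> real"
  assumes "a \<le> lo" "lo \<le> hi" "hi \<le> b"
    and "continuous_on {a..b} g" "continuous_on {a..b} G"
    and dg: "\<And>x. x \<in> {a<..<b} \<Longrightarrow> (g has_real_derivative G x) (at x)"
    and dG: "\<And>x. x \<in> {a<..<b} \<Longrightarrow> (G has_real_derivative g'' x) (at x)"
  shows "((\<lambda>t. (t - c)\<^sup>2 / 2 * g'' t) has_integral
           kernel_boundary_term g G c lo hi + integral {lo..hi} g) {lo..hi}"
proof -
  have cg: "continuous_on {lo..hi} g" and cG: "continuous_on {lo..hi} G"
    using assms(1-5) by (auto elim!: continuous_on_subset)
  define \<Phi> where "\<Phi> t = (t - c)\<^sup>2 / 2 * G t - (t - c) * g t + integral {lo..t} g" for t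
  have "((\<lambda>t. (t - c)\<^sup>2 / 2 * g'' t) has_integral \<Phi> hi - \<Phi> lo) {lo..hi}"
  proof (rule fundamental_theorem_of_calculus_interior[OF \<open>lo \<le> hi\<close>])
    show "continuous_on {lo..hi} \<Phi>"
      unfolding \<Phi>_def
      by (intro continuous_intros cg cG indefinite_integral_continuous_1 integrable_continuous_real) simp
    fix x assume "x \<in> {lo<..<hi}"
    then have x: "x \<in> {lo<..<hi}" "x \<in> {a<..<b}" using assms(1-3) by auto
    have "((\<lambda>u. integral {lo..u} g) has_vector_derivative g x) (at x within {lo..hi})"
      using x by (intro integral_has_vector_derivative cg) auto
    then have di: "((\<lambda>u. integral {lo..u} g) has_real_derivative g x) (at x)"
      using x by (simp add: at_within_Icc_at has_real_derivative_iff_has_vector_derivative)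
    have "(\<Phi> has_real_derivative (x - c)\<^sup>2 / 2 * g'' x) (at x)"
      unfolding \<Phi>_def by (rule derivative_eq_intros dg[OF x(2)] dG[OF x(2)] di refl | simp)+
    then show "(\<Phi> has_vector_derivative (x - c)\<^sup>2 / 2 * g'' x) (at x)"
      by (simp add: has_real_derivative_iff_has_vector_derivative)
  qed
  then show ?thesis by (simp add: \<Phi>_def kernel_boundary_term_def algebra_simps)
qed

lemma abs_integral_quadratic_kernel_le:
  fixes v :: "real \<Rightarrow> real"
  assumes "lo \<le> hi" and "c \<in> {lo, hi}"
    and kv: "(\<lambda>t. (t - c)\<^sup>2 / 2 * v t) integrable_on {lo..hi}"
    and v2: "(\<lambda>t. (v t)\<^sup>2) integrable_on {lo..hi}"
  shows "\<bar>integral {lo..hi} (\<lambda>t. (t - c)\<^sup>2 / 2 * v t)\<bar>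
           \<le> sqrt ((hi - lo) ^ 5 / 4 * integral {lo..hi} (\<lambda>t. (v t)\<^sup>2))"
proof -
  have k2: "(\<lambda>t. ((t - c)\<^sup>2 / 2)\<^sup>2) integrable_on {lo..hi}"
    by (intro integrable_continuous_real continuous_intros) simp
  have kernel_le: "((t - c)\<^sup>2 / 2)\<^sup>2 \<le> (hi - lo) ^ 4 / 4" if "t \<in> {lo..hi}" for t
  proof -
    have "\<bar>t - c\<bar> \<le> hi - lo" using that \<open>c \<in> {lo, hi}\<close> by auto
    then have "\<bar>t - c\<bar> ^ 4 \<le> (hi - lo) ^ 4" by (rule power_mono) simp
    then show ?thesis by (simp add: power_divide flip: power_mult)
  qed
  have "(integral {lo..hi} (\<lambda>t. (t - c)\<^sup>2 / 2 * v t))\<^sup>2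
        \<le> integral {lo..hi} (\<lambda>t. ((t - c)\<^sup>2 / 2)\<^sup>2) * integral {lo..hi} (\<lambda>t. (v t)\<^sup>2)"
    by (rule Cauchy_Schwarz_integral[OF k2 v2 kv])
  also have "\<dots> \<le> integral {lo..hi} (\<lambda>t. (hi - lo) ^ 4 / 4) * integral {lo..hi} (\<lambda>t. (v t)\<^sup>2)"
    using kernel_le k2 v2 by (intro mult_right_mono integral_le integral_nonneg) auto
  also have "\<dots> = (hi - lo) ^ 5 / 4 * integral {lo..hi} (\<lambda>t. (v t)\<^sup>2)"
    using \<open>lo \<le> hi\<close> by (simp add: eval_nat_numeral)
  finally show ?thesis by (metis real_sqrt_abs real_sqrt_le_mono)
qed

lemma sum_integral_uniform_grid:
  fixes f :: "real \<Rightarrow> real"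
  assumes "0 \<le> h" and "f integrable_on {a..a + real N * h}"
  shows "(\<Sum>k<N. integral {a + real k * h..a + real (Suc k) * h} f) = integral {a..a + real N * h} f"
  using assms(2)
proof (induction N)
  case (Suc N)
  have grid_le: "a + real N * h \<le> a + real (Suc N) * h" "a \<le> a + real N * h"
    using \<open>0 \<le> h\<close> by (auto simp: algebra_simps)
  then have "f integrable_on {a..a + real N * h}"
    using Suc.prems by (auto intro: integrable_subinterval_real)
  with Suc.IH grid_le Suc.prems show ?case
    by (simp add: Henstock_Kurzweil_Integration.integral_combine)
qed simp

text \<open>The points a + k (b - a)/(4n): the nodes x_i have k = 4i and the rule evaluates f at k = 4i + 1
and k = 4i + 3.  The kernel center of the quarter cell starting at k is its end with even index.\<close>
definition quarter_node :: "real \<Rightarrow> real \<Rightarrow> nat \<Rightarrow> nat \<Rightarrow> real" where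
  "quarter_node a b n k = a + real k * ((b - a) / (4 * real n))"

definition kernel_center :: "real \<Rightarrow> real \<Rightarrow> nat \<Rightarrow> nat \<Rightarrow> real" where
  "kernel_center a b n k = quarter_node a b n (2 * ((k + 1) div 2))"

lemma quarter_node_Suc: "quarter_node a b n (Suc k) = quarter_node a b n k + (b - a) / (4 * real n)"
  by (cases "n = 0") (simp_all add: quarter_node_def field_simps)

lemma quarter_node_last: "n \<ge> 1 \<Longrightarrow> quarter_node a b n (4 * n) = b"
  by (simp add: quarter_node_def)

lemma quarter_node_mono:
  assumes "a \<le> b" "k \<le> l" shows "quarter_node a b n k \<le> quarter_node a b n l"
  unfolding quarter_node_def using assms by (intro add_left_mono mult_right_mono) auto

lemma quarter_node_in_open_interval:
  assumes "a < b" "0 < k" "k < 4 * n"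
  shows "quarter_node a b n k \<in> {a<..<b}"
proof -
  have "0 < real k * ((b - a) / (4 * real n))"
    using assms by simp
  moreover have "real k * ((b - a) / (4 * real n)) < real (4 * n) * ((b - a) / (4 * real n))"
    using assms by (intro mult_strict_right_mono) auto
  ultimately have "0 < real k * ((b - a) / (4 * real n))" "real k * ((b - a) / (4 * real n)) < b - a"
    using assms by auto
  then show ?thesis by (simp add: quarter_node_def)
qed

lemma quarter_node_cell:
  assumes "a \<le> b" "n \<ge> 1" "k < 4 * n"
  shows "a \<le> quarter_node a b n k" "quarter_node a b n k \<le> quarter_node a b n (Suc k)"
    "quarter_node a b n (Suc k) \<le> b"
  using quarter_node_mono[OF \<open>a \<le> b\<close>, of 0 k n] quarter_node_mono[OF \<open>a \<le> b\<close>, of k "Suc k" n]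
    quarter_node_mono[OF \<open>a \<le> b\<close>, of "Suc k" "4 * n" n] assms
  by (auto simp: quarter_node_last quarter_node_def)

lemma kernel_center_cell:
  "kernel_center a b n k \<in> {quarter_node a b n k, quarter_node a b n (Suc k)}"
proof -
  have "2 * ((k + 1) div 2) = k \<or> 2 * ((k + 1) div 2) = Suc k" by presburger
  then show ?thesis by (auto simp: kernel_center_def)
qed

lemma quad_S_eq_quarter_nodes:
  "quad_S f a b n = (b - a) / (2 * real n) *
     (\<Sum>i<n. f (quarter_node a b n (4 * i + 1)) + f (quarter_node a b n (4 * i + 3)))"
proof -
  have "(3 * unif_node a b n i + unif_node a b n (Suc i)) / 4 = quarter_node a b n (4 * i + 1)"
       "(unif_node a b n i + 3 * unif_node a b n (Suc i)) / 4 = quarter_node a b n (4 * i + 3)" for i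
    by (cases "n = 0"; simp add: unif_node_def quarter_node_def field_simps)+
  then show ?thesis by (simp add: quad_S_def)
qed

lemma quad_S_cong:
  assumes "a < b" and "\<And>x. x \<in> {a<..<b} \<Longrightarrow> f x = g x"
  shows "quad_S f a b n = quad_S g a b n"
  unfolding quad_S_eq_quarter_nodes
  using assms quarter_node_in_open_interval[OF \<open>a < b\<close>] by (intro arg_cong2[of _ _ _ _ "(*)"] sum.cong) auto

lemma sum_kernel_boundary_terms:
  assumes "n \<ge> 1"
  shows "(\<Sum>k<4 * n. kernel_boundary_term g G (kernel_center a b n k)
            (quarter_node a b n k) (quarter_node a b n (Suc k))) = - quad_S g a b n"
proof -
  define q where "q = (b - a) / (4 * real n)"
  define z where "z = quarter_node a b n"
  define c where "c = kernel_center a b n"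
  define boundary where "boundary k = kernel_boundary_term g G (c k) (z k) (z (Suc k))" for k
  have z_eq: "z k = a + real k * q" for k by (simp add: z_def q_def quarter_node_def)
  have boundary_group: "sum boundary {i * 4..<i * 4 + 4} = - 2 * q * (g (z (4 * i + 1)) + g (z (4 * i + 3)))"
    for i :: nat
  proof -
    have "2 * ((4 * i + 1) div 2) = 4 * i" "2 * ((4 * i + 1 + 1) div 2) = 4 * i + 2"
         "2 * ((4 * i + 2 + 1) div 2) = 4 * i + 2" "2 * ((4 * i + 3 + 1) div 2) = 4 * i + 4"
      by presburger+
    then have "c (4 * i) = z (4 * i)" "c (4 * i + 1) = z (4 * i + 2)"
        "c (4 * i + 2) = z (4 * i + 2)" "c (4 * i + 3) = z (4 * i + 4)"
      unfolding c_def z_def kernel_center_def by (simp_all only:)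
    moreover have "{i * 4..<i * 4 + 4} = {4 * i, 4 * i + 1, 4 * i + 2, 4 * i + 3}" by auto
    ultimately show ?thesis
      by (simp add: boundary_def kernel_boundary_term_def z_eq algebra_simps power2_eq_square)
  qed
  have "(\<Sum>k<4 * n. boundary k) = (\<Sum>i<n. sum boundary {i * 4..<i * 4 + 4})"
    using sum.nat_group[of boundary 4 n] by (simp add: mult.commute)
  also have "\<dots> = - 2 * q * (\<Sum>i<n. g (z (4 * i + 1)) + g (z (4 * i + 3)))"
    by (simp only: boundary_group sum_distrib_left)
  also have "\<dots> = - quad_S g a b n"
    using \<open>n \<ge> 1\<close> by (simp add: quad_S_eq_quarter_nodes z_def q_def field_simps)
  finally show ?thesis by (simp add: boundary_def z_def c_def)
qed

lemma quad_S_error_eq_sum_kernel_integrals: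
  fixes g G g'' :: "real \<Rightarrow> real"
  assumes "a \<le> b" "n \<ge> 1"
    and cg: "continuous_on {a..b} g" and cG: "continuous_on {a..b} G"
    and dg: "\<And>x. x \<in> {a<..<b} \<Longrightarrow> (g has_real_derivative G x) (at x)"
    and dG: "\<And>x. x \<in> {a<..<b} \<Longrightarrow> (G has_real_derivative g'' x) (at x)"
  shows "integral {a..b} g - quad_S g a b n =
    (\<Sum>k<4 * n. integral {quarter_node a b n k..quarter_node a b n (Suc k)}
                   (\<lambda>t. (t - kernel_center a b n k)\<^sup>2 / 2 * g'' t))"
proof -
  define q where "q = (b - a) / (4 * real n)"
  define z where "z = quarter_node a b n"
  define c where "c = kernel_center a b n"
  have "0 \<le> q" using assms by (simp add: q_def)
  have by_parts: "integral {z k..z (Suc k)} (\<lambda>t. (t - c k)\<^sup>2 / 2 * g'' t)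
      = kernel_boundary_term g G (c k) (z k) (z (Suc k)) + integral {z k..z (Suc k)} g"
    if "k < 4 * n" for k
    unfolding z_def using quarter_node_cell[OF \<open>a \<le> b\<close> \<open>n \<ge> 1\<close> that]
    by (intro integral_unique has_integral_quadratic_kernel_by_parts[OF _ _ _ cg cG dg dG])
  have sum_cells: "(\<Sum>k<4 * n. integral {z k..z (Suc k)} g) = integral {a..b} g"
    using sum_integral_uniform_grid[OF \<open>0 \<le> q\<close>, of g a "4 * n"] integrable_continuous_real[OF cg]
      quarter_node_last[OF \<open>n \<ge> 1\<close>, of a b]
    by (simp add: z_def q_def quarter_node_def)
  have "(\<Sum>k<4 * n. integral {z k..z (Suc k)} (\<lambda>t. (t - c k)\<^sup>2 / 2 * g'' t))
      = (\<Sum>k<4 * n. kernel_boundary_term g G (c k) (z k) (z (Suc k)) + integral {z k..z (Suc k)} g)"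
    by (rule sum.cong[OF refl], rule by_parts, simp)
  also have "\<dots> = integral {a..b} g - quad_S g a b n"
    using sum_kernel_boundary_terms[OF \<open>n \<ge> 1\<close>, of g G a b] sum_cells
    by (simp add: sum.distrib z_def c_def)
  finally show ?thesis by (simp add: z_def c_def)
qed

lemma sum_sqrt_le_sqrt_card_mult_sum:
  fixes A :: "nat \<Rightarrow> real"
  assumes "\<And>k. k < N \<Longrightarrow> 0 \<le> A k"
  shows "(\<Sum>k<N. sqrt (A k)) \<le> sqrt (real N * (\<Sum>k<N. A k))"
  using Cauchy_Schwarz_ineq_sum[of "\<lambda>_. 1" "\<lambda>k. sqrt (A k)" "{..<N}"] assms
  by (intro real_le_rsqrt) simp

lemma sqrt_quarter_width_power:
  assumes "a \<le> b" "n \<ge> 1"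
  shows "sqrt (((b - a) / (4 * real n)) ^ 5 * real n) = (b - a) powr (5/2) / (32 * (real n)\<^sup>2)"
proof -
  have "((b - a) / (4 * real n)) ^ 5 * real n = (b - a) ^ 5 / (32 * (real n)\<^sup>2)\<^sup>2"
    using \<open>n \<ge> 1\<close> by (simp add: field_simps eval_nat_numeral)
  then have "sqrt (((b - a) / (4 * real n)) ^ 5 * real n) = sqrt ((b - a) ^ 5) / \<bar>32 * (real n)\<^sup>2\<bar>"
    by (simp only: real_sqrt_divide real_sqrt_abs)
  also have "sqrt ((b - a) ^ 5) = (b - a) powr (5/2)"
    using \<open>a \<le> b\<close> by (simp add: powr_half_sqrt_powr)
  finally show ?thesis by simp
qed

lemma quad_S_error_le:
  fixes g G g'' :: "real \<Rightarrow> real"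
  assumes "a \<le> b" "n \<ge> 1"
    and cg: "continuous_on {a..b} g" and cG: "continuous_on {a..b} G"
    and dg: "\<And>x. x \<in> {a<..<b} \<Longrightarrow> (g has_real_derivative G x) (at x)"
    and dG: "\<And>x. x \<in> {a<..<b} \<Longrightarrow> (G has_real_derivative g'' x) (at x)"
    and sq: "(\<lambda>t. (g'' t)\<^sup>2) integrable_on {a..b}"
  shows "\<bar>integral {a..b} g - quad_S g a b n\<bar> \<le> (b - a) powr (5/2) / (32 * (real n)\<^sup>2) * L2norm g'' a b"
proof -
  define q where "q = (b - a) / (4 * real n)"
  define z where "z = quarter_node a b n"
  define c where "c = kernel_center a b n"
  define A where "A k = integral {z k..z (Suc k)} (\<lambda>t. (g'' t)\<^sup>2)" for k
  define I where "I = integral {a..b} (\<lambda>t. (g'' t)\<^sup>2)"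
  note cell = quarter_node_cell[OF \<open>a \<le> b\<close> \<open>n \<ge> 1\<close>, folded z_def]
  have "0 \<le> q" using assms by (simp add: q_def)
  have sq_cell: "(\<lambda>t. (g'' t)\<^sup>2) integrable_on {z k..z (Suc k)}" if "k < 4 * n" for k
    using cell[OF that] by (intro integrable_subinterval_real[OF sq]) auto
  have A_nonneg: "0 \<le> A k" if "k < 4 * n" for k
    unfolding A_def by (rule integral_nonneg[OF sq_cell[OF that]]) simp
  have cell_le: "\<bar>integral {z k..z (Suc k)} (\<lambda>t. (t - c k)\<^sup>2 / 2 * g'' t)\<bar> \<le> sqrt (q ^ 5 / 4) * sqrt (A k)"
    if "k < 4 * n" for k
  proof -
    have "(\<lambda>t. (t - c k)\<^sup>2 / 2 * g'' t) integrable_on {z k..z (Suc k)}"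
      using has_integral_quadratic_kernel_by_parts[OF cell[OF that] cg cG dg dG] by blast
    moreover have "c k \<in> {z k, z (Suc k)}"
      unfolding c_def z_def by (rule kernel_center_cell)
    ultimately have "\<bar>integral {z k..z (Suc k)} (\<lambda>t. (t - c k)\<^sup>2 / 2 * g'' t)\<bar>
        \<le> sqrt ((z (Suc k) - z k) ^ 5 / 4 * A k)"
      unfolding A_def by (intro abs_integral_quadratic_kernel_le cell(2)[OF that] sq_cell[OF that])
    moreover have "z (Suc k) - z k = q"
      by (simp add: z_def q_def quarter_node_Suc)
    ultimately show ?thesis by (simp only: real_sqrt_mult)
  qed
  have "(\<Sum>k<4 * n. A k) = I"
    using sum_integral_uniform_grid[OF \<open>0 \<le> q\<close>, of "\<lambda>t. (g'' t)\<^sup>2" a "4 * n"] sq \<open>n \<ge> 1\<close>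
    by (simp add: A_def I_def z_def q_def quarter_node_def)
  then have sum_sqrt_A: "(\<Sum>k<4 * n. sqrt (A k)) \<le> sqrt (real (4 * n) * I)"
    using sum_sqrt_le_sqrt_card_mult_sum[of "4 * n" A] A_nonneg by simp
  have "integral {a..b} g - quad_S g a b n
      = (\<Sum>k<4 * n. integral {z k..z (Suc k)} (\<lambda>t. (t - c k)\<^sup>2 / 2 * g'' t))"
    unfolding z_def c_def by (rule quad_S_error_eq_sum_kernel_integrals[OF assms(1-6)])
  then have "\<bar>integral {a..b} g - quad_S g a b n\<bar>
      \<le> (\<Sum>k<4 * n. \<bar>integral {z k..z (Suc k)} (\<lambda>t. (t - c k)\<^sup>2 / 2 * g'' t)\<bar>)"
    by (simp only: sum_abs)
  also have "\<dots> \<le> sqrt (q ^ 5 / 4) * (\<Sum>k<4 * n. sqrt (A k))"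
    unfolding sum_distrib_left by (intro sum_mono cell_le) simp
  also have "\<dots> \<le> sqrt (q ^ 5 / 4) * sqrt (real (4 * n) * I)"
    using \<open>0 \<le> q\<close> by (intro mult_left_mono sum_sqrt_A) simp
  also have "\<dots> = sqrt (q ^ 5 * real n) * sqrt I"
    by (simp add: real_sqrt_mult[symmetric])
  also have "\<dots> = (b - a) powr (5/2) / (32 * (real n)\<^sup>2) * L2norm g'' a b"
    using sqrt_quarter_width_power[OF \<open>a \<le> b\<close> \<open>n \<ge> 1\<close>] by (simp add: q_def L2norm_def I_def)
  finally show ?thesis .
qed

lemma four_sqrt_3_pi_le_32: "4 * sqrt 3 * pi \<le> 32"
proof -
  have "sqrt 3 \<le> 7 / 4" by (rule real_le_lsqrt) (simp_all add: power2_eq_square)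
  then have "sqrt 3 * pi \<le> 7 / 4 * 4" using pi_less_4 by (intro mult_mono) simp_all
  then show ?thesis by (simp add: mult.commute)
qed

theorem theorem3p2:
  fixes f f' f'' :: "real \<Rightarrow> real" and a b :: real and n :: nat
  assumes "a < b" and "n \<ge> 1"
    and "\<And>x. x \<in> {a<..<b} \<Longrightarrow> (f has_real_derivative f' x) (at x)"
    and "\<And>x. x \<in> {a<..<b} \<Longrightarrow> (f' has_real_derivative f'' x) (at x)"
    and "continuous_on {a<..<b} f''"
    and "(\<lambda>t. (f'' t)\<^sup>2) integrable_on {a..b}"
  shows "f integrable_on {a..b} \<and>
         \<bar>integral {a..b} f - quad_S f a b n\<bar>
           \<le> (b - a) powr (5/2) / (4 * sqrt 3 * pi * (real n)\<^sup>2) * L2norm f'' a b"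
proof -
  obtain g G where cg: "continuous_on {a..b} g" and cG: "continuous_on {a..b} G"
    and gf: "\<And>x. x \<in> {a<..<b} \<Longrightarrow> g x = f x"
    and dg: "\<And>x. x \<in> {a<..<b} \<Longrightarrow> (g has_real_derivative G x) (at x)"
    and dG: "\<And>x. x \<in> {a<..<b} \<Longrightarrow> (G has_real_derivative f'' x) (at x)"
    using continuous_extension_of_L2_second_derivative[OF assms(1,3,4,6)] by blast
  have spike: "\<And>x. x \<in> {a..b} - {a, b} \<Longrightarrow> f x = g x" using gf by auto
  have "f integrable_on {a..b}"
    by (rule integrable_spike_finite[of "{a, b}", OF _ spike integrable_continuous_real[OF cg]]) simp
  moreover have "integral {a..b} f = integral {a..b} g"
    by (rule integral_spike[of "{a, b}" _ g f]) (auto intro: negligible_finite spike[symmetric])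
  moreover have "quad_S f a b n = quad_S g a b n"
    using quad_S_cong[OF \<open>a < b\<close>, of f g n] gf by simp
  moreover have "\<bar>integral {a..b} g - quad_S g a b n\<bar> \<le> (b - a) powr (5/2) / (32 * (real n)\<^sup>2) * L2norm f'' a b"
    using \<open>a < b\<close> by (intro quad_S_error_le[OF _ \<open>n \<ge> 1\<close> cg cG dg dG assms(6)]) simp
  moreover have "(b - a) powr (5/2) / (32 * (real n)\<^sup>2) * L2norm f'' a b
      \<le> (b - a) powr (5/2) / (4 * sqrt 3 * pi * (real n)\<^sup>2) * L2norm f'' a b"
    using \<open>n \<ge> 1\<close> four_sqrt_3_pi_le_32 integral_nonneg[OF assms(6)]
    by (intro mult_right_mono divide_left_mono) (auto simp: L2norm_def)
  ultimately show ?thesis by linarith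
qed

end
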